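(* Let $A=(a_{i,k})_{0\le i,k\le d-1}\in\mathbb{Z}^{d\times d}$ be a reduced idealizing matrix. Then the number of vectors $\beta\in\mathbb{Z}^d$ such that the $(d+1)\times(d+1)$ matrix $$\tilde A=\begin{pmatrix}A&\beta\\0&1\end{pmatrix}$$ is a reduced idealizing matrix equals $a_{d-1,d-1}^{\,d}$.
   Context: An idealizing matrix is an upper triangular integer matrix $A=(a_{i,k})_{0\le i,k\le d-1}$ with nonzero diagonal entries such that, for each $0\le j\le d-2$, the vector obtained by shifting the $j$-th column down by one, namely $(0,a_{0,j},a_{1,j},\dots,a_{d-2,j})^T$, lies in the $\mathbb{Z}$-span of columns $0,1,\dots,j+1$ of $A$. It is called reduced if its diagonal entries are positive and, in every row $i$, the entries $a_{i,k}$ with $k>i$ satisfy $0\le a_{i,k}\le a_{i,i}-1$. *)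

theory Defs
  imports Main
begin

text \<open>A d x d integer matrix is represented as a function nat => nat => int;
  only the entries with indices below d are relevant.\<close>

definition idealizing :: "nat \<Rightarrow> (nat \<Rightarrow> nat \<Rightarrow> int) \<Rightarrow> bool" where
  "idealizing d A \<longleftrightarrow>
     (\<forall>i<d. \<forall>k<d. k < i \<longrightarrow> A i k = 0) \<and>
     (\<forall>i<d. A i i \<noteq> 0) \<and>
     (\<forall>j. j + 1 < d \<longrightarrow>
        (\<exists>c :: nat \<Rightarrow> int. \<forall>r<d.
           (if r = 0 then 0 else A (r - 1) j) = (\<Sum>k\<le>j+1. c k * A r k)))"

definition reduced_idealizing :: "nat \<Rightarrow> (nat \<Rightarrow> nat \<Rightarrow> int) \<Rightarrow> bool" where
  "reduced_idealizing d A \<longleftrightarrow>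
     idealizing d A \<and>
     (\<forall>i<d. A i i > 0) \<and>
     (\<forall>i<d. \<forall>k<d. i < k \<longrightarrow> 0 \<le> A i k \<and> A i k \<le> A i i - 1)"

definition extend_mat :: "nat \<Rightarrow> (nat \<Rightarrow> nat \<Rightarrow> int) \<Rightarrow> int list \<Rightarrow> (nat \<Rightarrow> nat \<Rightarrow> int)" where
  "extend_mat d A \<beta> = (\<lambda>i k.
     if i < d \<and> k < d then A i k
     else if i < d \<and> k = d then \<beta> ! i
     else if i = d \<and> k < d then 0
     else 1)"

end

theory Submission
  imports Defs
begin

text \<open>Let a = A(d-1,d-1). By the idealizing condition each diagonal entry is a multiple of the
  next one, and a multiple of each column is an integer combination of the earlier columns and the
  shifted previous column; by induction on d, a divides every entry of A. In the extended matrix only the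
  shifted last column of A imposes a new condition; comparing last rows forces the coefficient of
  \<open>\<beta>\<close> to be a, so the condition says that \<open>\<beta>\<close> lies in a fixed coset of the column lattice
  of M = A/a. Reducedness confines \<open>\<beta>\<close> to the box of side lengths A(i,i) = a M(i,i). Since M
  is upper triangular with positive diagonal, the box with side lengths t M(i,i) meets every coset
  in exactly t^d points: the last coordinate runs through a residue class modulo M(d-1,d-1),
  giving t choices, and each choice leaves a coset of the same kind in one dimension less.\<close>

lemma idealizing_Suc_imp_idealizing:
  assumes "idealizing (Suc d) A"
  shows "idealizing d A"
  using assms unfolding idealizing_def by (metis less_Suc_eq)

lemma idealizing_column_step:
  assumes I: "idealizing d A" and j: "j + 1 < d"
  obtains c :: "nat \<Rightarrow> int"
  where "A j j = c (j + 1) * A (j + 1) (j + 1)"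
    and "\<And>r. r < d \<Longrightarrow>
           c (j + 1) * A r (j + 1) = (if r = 0 then 0 else A (r - 1) j) - (\<Sum>k\<le>j. c k * A r k)"
proof -
  obtain c :: "nat \<Rightarrow> int"
    where c: "\<And>r. r < d \<Longrightarrow> (if r = 0 then 0 else A (r - 1) j) = (\<Sum>k\<le>j + 1. c k * A r k)"
    using I j unfolding idealizing_def by blast
  have split: "(\<Sum>k\<le>j + 1. c k * A r k) = (\<Sum>k\<le>j. c k * A r k) + c (j + 1) * A r (j + 1)" for r
    by simp
  have "(\<Sum>k\<le>j. c k * A (j + 1) k) = 0"
    using I j unfolding idealizing_def by (intro sum.neutral) auto
  then have "A j j = c (j + 1) * A (j + 1) (j + 1)"
    using c[of "j + 1"] j split[of "j + 1"] by simp
  moreover have "c (j + 1) * A r (j + 1) = (if r = 0 then 0 else A (r - 1) j) - (\<Sum>k\<le>j. c k * A r k)"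
    if "r < d" for r
    using c[OF that] split[of r] by simp
  ultimately show ?thesis by (rule that)
qed

lemma idealizing_last_diag_dvd:
  assumes "idealizing (Suc n) A" "i < Suc n" "k < Suc n"
  shows "A n n dvd A i k"
  using assms
proof (induction n arbitrary: i k)
  case 0
  then show ?case by simp
next
  case (Suc n)
  note I = Suc.prems(1)
  have IH: "A n n dvd A i k" if "i < Suc n" "k < Suc n" for i k
    using Suc.IH[OF idealizing_Suc_imp_idealizing[OF I]] that .
  obtain c :: "nat \<Rightarrow> int"
    where diag: "A n n = c (Suc n) * A (Suc n) (Suc n)"
      and col: "\<And>r. r < Suc (Suc n) \<Longrightarrow>
        c (Suc n) * A r (Suc n) = (if r = 0 then 0 else A (r - 1) n) - (\<Sum>k\<le>n. c k * A r k)"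
    using idealizing_column_step[OF I, of n] by auto
  have "c (Suc n) \<noteq> 0"
    using diag I unfolding idealizing_def by auto
  show ?case
  proof (cases "i = Suc n")
    case True
    then show ?thesis
      using I Suc.prems unfolding idealizing_def by (cases "k = Suc n") auto
  next
    case False
    then have i: "i < Suc n"
      using Suc.prems by simp
    show ?thesis
    proof (cases "k = Suc n")
      case False
      then have "A n n dvd A i k"
        using IH i Suc.prems by simp
      then show ?thesis
        using diag dvd_mult_left by auto
    next
      case True
      have "A n n dvd (if i = 0 then 0 else A (i - 1) n) - (\<Sum>k\<le>n. c k * A i k)"
        using i IH by (intro dvd_diff dvd_sum) auto
      then have "c (Suc n) * A (Suc n) (Suc n) dvd c (Suc n) * A i (Suc n)"
        using col[of i] i diag by simp
      then show ?thesis
        using True \<open>c (Suc n) \<noteq> 0\<close> by simp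
    qed
  qed
qed

lemma extend_mat_simps [simp]:
  "i < d \<Longrightarrow> k < d \<Longrightarrow> extend_mat d A \<beta> i k = A i k"
  "i < d \<Longrightarrow> extend_mat d A \<beta> i d = \<beta> ! i"
  "k < d \<Longrightarrow> extend_mat d A \<beta> d k = 0"
  "extend_mat d A \<beta> d d = 1"
  by (simp_all add: extend_mat_def)

lemma extend_mat_last_column_iff:
  fixes A :: "nat \<Rightarrow> nat \<Rightarrow> int"
  shows "(\<exists>c :: nat \<Rightarrow> int. \<forall>r<Suc n + 1. (if r = 0 then 0 else extend_mat (Suc n) A \<beta> (r - 1) n)
            = (\<Sum>k\<le>n + 1. c k * extend_mat (Suc n) A \<beta> r k)) \<longleftrightarrow>
         (\<exists>c :: nat \<Rightarrow> int. \<forall>r<Suc n. A n n * \<beta> ! r - (if r = 0 then 0 else A (r - 1) n)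
            = (\<Sum>k<Suc n. c k * A r k))"
    (is "(\<exists>c. \<forall>r<Suc n + 1. ?shift r = ?comb c r) \<longleftrightarrow> (\<exists>c. \<forall>r<Suc n. ?cond c r)")
proof -
  have comb_last: "?comb c (Suc n) = c (Suc n)" for c
    by (simp add: atMost_Suc)
  have comb: "?comb c r = (\<Sum>k<Suc n. c k * A r k) + c (Suc n) * \<beta> ! r" if "r < Suc n" for c r
    using that by (simp add: atMost_Suc lessThan_Suc_atMost)
  have shift: "?shift r = (if r = 0 then 0 else A (r - 1) n)" if "r < Suc n" for r
    using that by simp
  show ?thesis
  proof
    assume "\<exists>c. \<forall>r<Suc n + 1. ?shift r = ?comb c r"
    then obtain c where c: "\<And>r. r < Suc n + 1 \<Longrightarrow> ?shift r = ?comb c r"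
      by blast
    have "?shift (Suc n) = ?comb c (Suc n)"
      by (rule c) simp
    then have "c (Suc n) = A n n"
      unfolding comb_last by simp
    have "?cond (\<lambda>k. - c k) r" if "r < Suc n" for r
    proof -
      have "?shift r = ?comb c r"
        using that by (intro c) simp
      then have "(if r = 0 then 0 else A (r - 1) n) = (\<Sum>k<Suc n. c k * A r k) + A n n * \<beta> ! r"
        unfolding comb[OF that] shift[OF that] \<open>c (Suc n) = A n n\<close> .
      then show ?thesis
        by (simp add: sum_negf)
    qed
    then show "\<exists>c. \<forall>r<Suc n. ?cond c r"
      by (intro exI[of _ "\<lambda>k. - c k"]) blast
  next
    assume "\<exists>c. \<forall>r<Suc n. ?cond c r"
    then obtain c where c: "\<And>r. r < Suc n \<Longrightarrow> ?cond c r"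
      by blast
    let ?c = "(\<lambda>k. - c k)(Suc n := A n n)"
    have "?shift r = ?comb ?c r" if "r < Suc n + 1" for r
    proof (cases "r = Suc n")
      case True
      then show ?thesis
        unfolding comb_last by simp
    next
      case False
      then have r: "r < Suc n"
        using that by simp
      have "(\<Sum>k<Suc n. ?c k * A r k) = - (\<Sum>k<Suc n. c k * A r k)"
        by (simp add: sum_negf)
      then show ?thesis
        unfolding comb[OF r] shift[OF r] using c[OF r] by simp
    qed
    then show "\<exists>c. \<forall>r<Suc n + 1. ?shift r = ?comb c r"
      by (intro exI[of _ ?c]) blast
  qed
qed

lemma extend_mat_inner_column:
  assumes I: "idealizing d A" and j: "j + 1 < d"
  shows "\<exists>c :: nat \<Rightarrow> int. \<forall>r<d + 1. (if r = 0 then 0 else extend_mat d A \<beta> (r - 1) j)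
           = (\<Sum>k\<le>j + 1. c k * extend_mat d A \<beta> r k)"
proof -
  obtain c :: "nat \<Rightarrow> int"
    where c: "\<And>r. r < d \<Longrightarrow> (if r = 0 then 0 else A (r - 1) j) = (\<Sum>k\<le>j + 1. c k * A r k)"
    using I j unfolding idealizing_def by blast
  have "(if r = 0 then 0 else extend_mat d A \<beta> (r - 1) j) = (\<Sum>k\<le>j + 1. c k * extend_mat d A \<beta> r k)"
    if "r < d + 1" for r
  proof (cases "r < d")
    case True
    then show ?thesis
      using c[OF True] j by (auto intro!: sum.cong)
  next
    case False
    then have "r = d" using that by simp
    moreover have "A (d - 1) j = 0"
      using I j unfolding idealizing_def by simp
    ultimately show ?thesis
      using j by simp
  qed
  then show ?thesis
    by (intro exI[of _ c]) blast
qed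

lemma idealizing_extend_mat_iff:
  assumes I: "idealizing (Suc n) A"
  shows "idealizing (Suc n + 1) (extend_mat (Suc n) A \<beta>) \<longleftrightarrow>
    (\<exists>c :: nat \<Rightarrow> int. \<forall>r<Suc n. A n n * \<beta> ! r - (if r = 0 then 0 else A (r - 1) n)
       = (\<Sum>k<Suc n. c k * A r k))"
proof -
  let ?E = "extend_mat (Suc n) A \<beta>"
  have upper: "\<forall>i<Suc n + 1. \<forall>k<Suc n + 1. k < i \<longrightarrow> ?E i k = 0"
    using I unfolding idealizing_def by (auto simp: less_Suc_eq)
  have diag: "\<forall>i<Suc n + 1. ?E i i \<noteq> 0"
    using I unfolding idealizing_def by (auto simp: less_Suc_eq)
  have columns: "(\<forall>j. j + 1 < Suc n + 1 \<longrightarrow> (\<exists>c :: nat \<Rightarrow> int. \<forall>r<Suc n + 1.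
        (if r = 0 then 0 else ?E (r - 1) j) = (\<Sum>k\<le>j + 1. c k * ?E r k))) \<longleftrightarrow>
      (\<exists>c :: nat \<Rightarrow> int. \<forall>r<Suc n + 1.
        (if r = 0 then 0 else ?E (r - 1) n) = (\<Sum>k\<le>n + 1. c k * ?E r k))"
  proof
    assume "\<forall>j. j + 1 < Suc n + 1 \<longrightarrow> (\<exists>c :: nat \<Rightarrow> int. \<forall>r<Suc n + 1.
        (if r = 0 then 0 else ?E (r - 1) j) = (\<Sum>k\<le>j + 1. c k * ?E r k))"
    then show "\<exists>c :: nat \<Rightarrow> int. \<forall>r<Suc n + 1.
        (if r = 0 then 0 else ?E (r - 1) n) = (\<Sum>k\<le>n + 1. c k * ?E r k)"
      by simp
  next
    assume last: "\<exists>c :: nat \<Rightarrow> int. \<forall>r<Suc n + 1.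
        (if r = 0 then 0 else ?E (r - 1) n) = (\<Sum>k\<le>n + 1. c k * ?E r k)"
    show "\<forall>j. j + 1 < Suc n + 1 \<longrightarrow> (\<exists>c :: nat \<Rightarrow> int. \<forall>r<Suc n + 1.
        (if r = 0 then 0 else ?E (r - 1) j) = (\<Sum>k\<le>j + 1. c k * ?E r k))"
    proof (intro allI impI)
      fix j
      assume "j + 1 < Suc n + 1"
      then consider "j = n" | "j + 1 < Suc n"
        by linarith
      then show "\<exists>c :: nat \<Rightarrow> int. \<forall>r<Suc n + 1.
          (if r = 0 then 0 else ?E (r - 1) j) = (\<Sum>k\<le>j + 1. c k * ?E r k)"
      proof cases
        case 1
        then show ?thesis using last by (simp only:)
      next
        case 2
        then show ?thesis by (rule extend_mat_inner_column[OF I])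
      qed
    qed
  qed
  show ?thesis
    unfolding idealizing_def columns extend_mat_last_column_iff[symmetric]
    by (intro iffI conjI upper diag) (simp_all only: simp_thms)
qed

lemma scaled_lattice_equation_iff:
  fixes a :: int and M :: "nat \<Rightarrow> nat \<Rightarrow> int"
  assumes a: "a \<noteq> 0" and M: "\<And>r k. r < d \<Longrightarrow> k < d \<Longrightarrow> a dvd M r k"
    and w: "\<And>r. r < d \<Longrightarrow> a dvd w r"
  shows "(\<exists>c :: nat \<Rightarrow> int. \<forall>r<d. a * y r - w r = (\<Sum>k<d. c k * M r k)) \<longleftrightarrow>
         (\<exists>c :: nat \<Rightarrow> int. \<forall>r<d. y r - w r div a = (\<Sum>k<d. c k * (M r k div a)))"
proof -
  have "a * y r - w r = (\<Sum>k<d. c k * M r k) \<longleftrightarrow> y r - w r div a = (\<Sum>k<d. c k * (M r k div a))"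
    if "r < d" for c r
  proof -
    have "a * y r - w r = a * (y r - w r div a)"
      using w[OF that] by (simp add: algebra_simps)
    moreover have "(\<Sum>k<d. c k * M r k) = a * (\<Sum>k<d. c k * (M r k div a))"
      unfolding sum_distrib_left using M[OF that] by (intro sum.cong) (auto simp: mult.left_commute)
    ultimately show ?thesis
      using a by simp
  qed
  then show ?thesis
    by meson
qed

lemma reduced_idealizing_extend_mat_iff:
  assumes "reduced_idealizing d A"
  shows "reduced_idealizing (d + 1) (extend_mat d A \<beta>) \<longleftrightarrow>
    idealizing (d + 1) (extend_mat d A \<beta>) \<and> (\<forall>i<d. 0 \<le> \<beta> ! i \<and> \<beta> ! i < A i i)"
  using assms unfolding reduced_idealizing_def by (auto simp: less_Suc_eq)

lemma card_residue_class_below_multiple: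
  fixes t m r :: int
  assumes "t > 0" "m > 0"
  shows "int (card {x. 0 \<le> x \<and> x < t * m \<and> m dvd x - r}) = t"
proof -
  have "{x. 0 \<le> x \<and> x < t * m \<and> m dvd x - r} = (\<lambda>q. q * m + r mod m) ` {0..<t}"
  proof (intro set_eqI iffI)
    fix x
    assume "x \<in> {x. 0 \<le> x \<and> x < t * m \<and> m dvd x - r}"
    then have x: "0 \<le> x" "x < t * m" "m dvd x - r" by simp_all
    have "x div m * m < t * m"
      using x pos_mod_sign[of m x] div_mult_mod_eq[of x m] \<open>m > 0\<close> by linarith
    then have "x div m < t"
      using \<open>m > 0\<close> by simp
    moreover have "x = x div m * m + r mod m"
      using x by (metis mod_eq_dvd_iff div_mult_mod_eq)
    moreover have "0 \<le> x div m"
      using x \<open>m > 0\<close> by (simp add: pos_imp_zdiv_nonneg_iff)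
    ultimately show "x \<in> (\<lambda>q. q * m + r mod m) ` {0..<t}" by force
  next
    fix x
    assume "x \<in> (\<lambda>q. q * m + r mod m) ` {0..<t}"
    then obtain q where q: "0 \<le> q" "q + 1 \<le> t" and x: "x = q * m + r mod m" by auto
    have "q * m + m \<le> t * m"
      using mult_right_mono[of "q + 1" t m] q \<open>m > 0\<close> by (simp add: algebra_simps)
    then have "x < t * m"
      using x pos_mod_bound[OF \<open>m > 0\<close>, of r] by linarith
    moreover have "0 \<le> x"
      using x q pos_mod_sign[of m r] \<open>m > 0\<close> by simp
    moreover have "m dvd x - r"
      using x by (simp add: mod_eq_dvd_iff[symmetric])
    ultimately show "x \<in> {x. 0 \<le> x \<and> x < t * m \<and> m dvd x - r}"
      by simp
  qed
  moreover have "inj_on (\<lambda>q. q * m + r mod m) {0..<t}"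
    using \<open>m > 0\<close> by (auto simp: inj_on_def)
  ultimately show ?thesis
    using \<open>t > 0\<close> by (simp add: card_image)
qed

definition coset_box :: "nat \<Rightarrow> (nat \<Rightarrow> nat \<Rightarrow> int) \<Rightarrow> int \<Rightarrow> (nat \<Rightarrow> int) \<Rightarrow> int list set" where
  "coset_box d M t g = {\<beta>. length \<beta> = d \<and> (\<forall>i<d. 0 \<le> \<beta> ! i \<and> \<beta> ! i < t * M i i) \<and>
     (\<exists>c :: nat \<Rightarrow> int. \<forall>r<d. \<beta> ! r - g r = (\<Sum>k<d. c k * M r k))}"

lemma snoc_mem_coset_box_iff:
  fixes M :: "nat \<Rightarrow> nat \<Rightarrow> int"
  assumes upper: "\<And>k. k < n \<Longrightarrow> M n k = 0" and pos: "M n n > 0" and len: "length b = n"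
  shows "b @ [x] \<in> coset_box (Suc n) M t g \<longleftrightarrow>
    0 \<le> x \<and> x < t * M n n \<and> M n n dvd x - g n \<and>
    b \<in> coset_box n M t (\<lambda>r. g r + (x - g n) div M n n * M r n)"
proof -
  let ?G = "\<lambda>r. g r + (x - g n) div M n n * M r n"
  have nth_snoc: "(b @ [x]) ! r = (if r < n then b ! r else x)" if "r < Suc n" for r
    using len that by (simp add: nth_append)
  have box: "(\<forall>i<Suc n. 0 \<le> (b @ [x]) ! i \<and> (b @ [x]) ! i < t * M i i) \<longleftrightarrow>
      (\<forall>i<n. 0 \<le> b ! i \<and> b ! i < t * M i i) \<and> 0 \<le> x \<and> x < t * M n n"
    by (auto simp: nth_snoc less_Suc_eq)
  have split: "(\<Sum>k<Suc n. c k * M r k) = (\<Sum>k<n. c k * M r k) + c n * M r n" for c r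
    by simp
  have last_row: "(\<Sum>k<n. c k * M n k) = 0" for c :: "nat \<Rightarrow> int"
    using upper by simp
  have lattice: "(\<exists>c :: nat \<Rightarrow> int. \<forall>r<Suc n. (b @ [x]) ! r - g r = (\<Sum>k<Suc n. c k * M r k)) \<longleftrightarrow>
      M n n dvd x - g n \<and> (\<exists>c :: nat \<Rightarrow> int. \<forall>r<n. b ! r - ?G r = (\<Sum>k<n. c k * M r k))"
  proof
    assume "\<exists>c :: nat \<Rightarrow> int. \<forall>r<Suc n. (b @ [x]) ! r - g r = (\<Sum>k<Suc n. c k * M r k)"
    then obtain c :: "nat \<Rightarrow> int"
      where c: "\<And>r. r < Suc n \<Longrightarrow> (b @ [x]) ! r - g r = (\<Sum>k<n. c k * M r k) + c n * M r n"
      unfolding split by blast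
    have "x - g n = c n * M n n"
      using c[of n] by (simp add: nth_snoc last_row)
    then have "M n n dvd x - g n" and "(x - g n) div M n n = c n"
      using pos by simp_all
    moreover have "b ! r - ?G r = (\<Sum>k<n. c k * M r k)" if "r < n" for r
      using c[of r] that \<open>(x - g n) div M n n = c n\<close> by (simp add: nth_snoc)
    ultimately show "M n n dvd x - g n \<and> (\<exists>c. \<forall>r<n. b ! r - ?G r = (\<Sum>k<n. c k * M r k))"
      by blast
  next
    assume "M n n dvd x - g n \<and> (\<exists>c :: nat \<Rightarrow> int. \<forall>r<n. b ! r - ?G r = (\<Sum>k<n. c k * M r k))"
    then obtain c :: "nat \<Rightarrow> int"
      where dvd: "M n n dvd x - g n" and c: "\<And>r. r < n \<Longrightarrow> b ! r - ?G r = (\<Sum>k<n. c k * M r k)"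
      by blast
    let ?c = "c(n := (x - g n) div M n n)"
    have "(b @ [x]) ! r - g r = (\<Sum>k<Suc n. ?c k * M r k)" if "r < Suc n" for r
    proof (cases "r < n")
      case True
      then show ?thesis using c[OF True] by (simp add: nth_snoc algebra_simps)
    next
      case False
      then have "r = n" using that by simp
      then show ?thesis using dvd by (simp add: nth_snoc last_row)
    qed
    then show "\<exists>c :: nat \<Rightarrow> int. \<forall>r<Suc n. (b @ [x]) ! r - g r = (\<Sum>k<Suc n. c k * M r k)"
      by blast
  qed
  show ?thesis
    unfolding coset_box_def using len box lattice by auto
qed

lemma coset_box_Suc:
  fixes M :: "nat \<Rightarrow> nat \<Rightarrow> int"
  assumes "\<And>k. k < n \<Longrightarrow> M n k = 0" "M n n > 0"
  shows "coset_box (Suc n) M t g =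
    (\<Union>x\<in>{x. 0 \<le> x \<and> x < t * M n n \<and> M n n dvd x - g n}.
       (\<lambda>b. b @ [x]) ` coset_box n M t (\<lambda>r. g r + (x - g n) div M n n * M r n))"
proof (intro set_eqI iffI)
  fix \<beta>
  assume \<beta>: "\<beta> \<in> coset_box (Suc n) M t g"
  then have "length \<beta> = Suc n"
    by (simp add: coset_box_def)
  then obtain b x where b: "length b = n" and "\<beta> = b @ [x]"
    by (metis length_Suc_conv_rev)
  then show "\<beta> \<in> (\<Union>x\<in>{x. 0 \<le> x \<and> x < t * M n n \<and> M n n dvd x - g n}.
       (\<lambda>b. b @ [x]) ` coset_box n M t (\<lambda>r. g r + (x - g n) div M n n * M r n))"
    using \<beta> snoc_mem_coset_box_iff[where n = n and M = M, OF assms b] by blast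
next
  fix \<beta>
  assume "\<beta> \<in> (\<Union>x\<in>{x. 0 \<le> x \<and> x < t * M n n \<and> M n n dvd x - g n}.
       (\<lambda>b. b @ [x]) ` coset_box n M t (\<lambda>r. g r + (x - g n) div M n n * M r n))"
  then obtain x b where "\<beta> = b @ [x]" "0 \<le> x" "x < t * M n n" "M n n dvd x - g n"
    and b: "b \<in> coset_box n M t (\<lambda>r. g r + (x - g n) div M n n * M r n)"
    by blast
  moreover have "length b = n"
    using b by (simp add: coset_box_def)
  ultimately show "\<beta> \<in> coset_box (Suc n) M t g"
    using snoc_mem_coset_box_iff[where n = n and M = M, OF assms] by blast
qed

lemma card_coset_box:
  fixes M :: "nat \<Rightarrow> nat \<Rightarrow> int"
  assumes "t > 0" "\<And>i. i < d \<Longrightarrow> M i i > 0" "\<And>i k. i < d \<Longrightarrow> k < i \<Longrightarrow> M i k = 0"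
  shows "int (card (coset_box d M t g)) = t ^ d"
  using assms(2,3)
proof (induction d arbitrary: g)
  case 0
  have "coset_box 0 M t g = {[]}"
    by (auto simp: coset_box_def)
  then show ?case by simp
next
  case (Suc n)
  define X where "X = {x. 0 \<le> x \<and> x < t * M n n \<and> M n n dvd x - g n}"
  define G where "G x = (\<lambda>r. g r + (x - g n) div M n n * M r n)" for x
  have upper: "\<And>k. k < n \<Longrightarrow> M n k = 0" and pos: "M n n > 0"
    using Suc.prems by simp_all
  have IH: "int (card (coset_box n M t h)) = t ^ n" for h
    using Suc by simp
  then have fin: "finite (coset_box n M t h)" for h
    using \<open>t > 0\<close> by (metis card_ge_0_finite of_nat_0_less_iff zero_less_power)
  have "int (card X) = t"
    unfolding X_def using card_residue_class_below_multiple \<open>t > 0\<close> pos .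
  then have "finite X"
    using \<open>t > 0\<close> by (metis card_ge_0_finite of_nat_0_less_iff)
  have "coset_box (Suc n) M t g = (\<Union>x\<in>X. (\<lambda>b. b @ [x]) ` coset_box n M t (G x))"
    unfolding X_def G_def by (rule coset_box_Suc[where n = n and M = M, OF upper pos])
  then have "card (coset_box (Suc n) M t g) = (\<Sum>x\<in>X. card ((\<lambda>b. b @ [x]) ` coset_box n M t (G x)))"
    using \<open>finite X\<close> fin by (simp only:) (rule card_UN_disjoint, auto)
  also have "\<dots> = (\<Sum>x\<in>X. card (coset_box n M t (G x)))"
    by (intro sum.cong refl card_image) (auto simp: inj_on_def)
  finally show ?case
    using IH \<open>int (card X) = t\<close> by simp
qed

lemma extensions_eq_coset_box:
  assumes R: "reduced_idealizing (Suc n) A"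
  shows "{\<beta>. length \<beta> = Suc n \<and> reduced_idealizing (Suc n + 1) (extend_mat (Suc n) A \<beta>)} =
    coset_box (Suc n) (\<lambda>r k. A r k div A n n) (A n n) (\<lambda>r. (if r = 0 then 0 else A (r - 1) n) div A n n)"
proof -
  have I: "idealizing (Suc n) A" and "A n n > 0"
    using R by (simp_all add: reduced_idealizing_def)
  have dvd: "A n n dvd A r k" if "r < Suc n" "k < Suc n" for r k
    using idealizing_last_diag_dvd[OF I that] .
  have "(\<exists>c :: nat \<Rightarrow> int. \<forall>r<Suc n. A n n * \<beta> ! r - (if r = 0 then 0 else A (r - 1) n)
          = (\<Sum>k<Suc n. c k * A r k)) \<longleftrightarrow>
        (\<exists>c :: nat \<Rightarrow> int. \<forall>r<Suc n. \<beta> ! r - (if r = 0 then 0 else A (r - 1) n) div A n n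
          = (\<Sum>k<Suc n. c k * (A r k div A n n)))" for \<beta>
    using \<open>A n n > 0\<close> dvd by (intro scaled_lattice_equation_iff) auto
  moreover have "A n n * (A i i div A n n) = A i i" if "i < Suc n" for i
    using dvd[OF that that] by simp
  ultimately show ?thesis
    unfolding coset_box_def reduced_idealizing_extend_mat_iff[OF R]
      idealizing_extend_mat_iff[OF I]
    by auto
qed

theorem lemma3p1:
  fixes d :: nat and A :: "nat \<Rightarrow> nat \<Rightarrow> int"
  assumes "d \<ge> 1"
    and "reduced_idealizing d A"
  shows "int (card {\<beta> :: int list. length \<beta> = d \<and>
                     reduced_idealizing (d + 1) (extend_mat d A \<beta>)})
         = A (d - 1) (d - 1) ^ d"
proof -
  obtain n where d: "d = Suc n"
    using assms(1) by (cases d) auto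
  have R: "reduced_idealizing (Suc n) A"
    using assms(2) d by simp
  then have I: "idealizing (Suc n) A" and pos: "\<And>i. i < Suc n \<Longrightarrow> A i i > 0"
    by (simp_all add: reduced_idealizing_def)
  have "A i i div A n n > 0" if "i < Suc n" for i
    using pos[OF that] pos[of n] idealizing_last_diag_dvd[OF I that that]
    by (simp add: pos_imp_zdiv_pos_iff zdvd_imp_le)
  moreover have "A i k div A n n = 0" if "i < Suc n" "k < i" for i k
    using I that unfolding idealizing_def by simp
  ultimately show ?thesis
    unfolding d extensions_eq_coset_box[OF R] using pos[of n]
    by (subst card_coset_box) auto
qed

end
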